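(* Let $\mathcal X$ be an input space and $\mathcal Y$ an output space, let $r:\mathcal X\times\mathcal Y\to\mathbb R$ be a reward function, let $\pi_0(y\mid x)$ be the current conditional policy, assumed absolutely continuous, let $A(x,y)$ denote the advantage function (of the form $r(x,y)+\lambda(x)$ for a baseline $\lambda:\mathcal X\to\mathbb R$), and fix $\gamma\ge 0$ and $\eta>0$. Let $\delta\mathcal F(\pi_0;\delta\pi)=\int_{\mathcal Y}r(x,y)\,\delta\pi(y\mid x)\,dy$ be the first variation of the expected return functional $\mathcal F(\pi)=\mathbb E_{y\sim\pi(y\mid x)}[r(x,y)]$. Consider, over all admissible variations $\delta\pi(y\mid x)$ (signed measures with $\int\delta\pi(y\mid x)\,dy=0$ for every $x$), the local update problem with the $\gamma$-weighted variational metric \[ \max_{\delta\pi}\Big\{\delta\mathcal F(\pi_0;\delta\pi)-\frac{1}{2\eta}\int_{\mathcal Y}\frac{(\delta\pi(y\mid x))^2}{|A(x,y)|^{\gamma}\,\pi_0(y\mid x)}\,dy\Big\}. \] Then the optimal ascent satisfies \[ \delta\pi(y\mid x)\propto\pi_0(y\mid x)\,\mathrm{sign}(A(x,y))\,|A(x,y)|^{1+\gamma}. \]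
   Context: The $\gamma$-weighted variational metric on admissible variations at $\pi_0$ is $\langle\delta\pi_1,\delta\pi_2\rangle^{\gamma}_{\pi_0}=\int_{\mathcal Y}\frac{\delta\pi_1(y\mid x)\,\delta\pi_2(y\mid x)}{|A(x,y)|^{\gamma}\pi_0(y\mid x)}\,dy$, a weighted version of the Fisher–Rao metric; advantage functions differing by a function of $x$ alone are regarded as equivalent (they give the same policy gradient). *)

theory Defs
  imports "HOL-Analysis.Analysis"
begin

text \<open>|a|^g with the convention |a|^0 = 1 (also at a = 0).\<close>
definition gpow :: "real \<Rightarrow> real \<Rightarrow> real" where
  "gpow a g = (if g = 0 then 1 else \<bar>a\<bar> powr g)"

definition metric_weight ::
  "('x \<Rightarrow> 'y \<Rightarrow> real) \<Rightarrow> ('x \<Rightarrow> 'y \<Rightarrow> real) \<Rightarrow> real \<Rightarrow> 'x \<Rightarrow> 'y \<Rightarrow> real" where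
  "metric_weight A \<pi>0 \<gamma> x y = gpow (A x y) \<gamma> * \<pi>0 x y"

text \<open>Where the weight
  vanishes the penalty d^2/w is infinite unless d vanishes, so d must vanish a.e. there.\<close>
definition admissible ::
  "'y measure \<Rightarrow> ('x \<Rightarrow> 'y \<Rightarrow> real) \<Rightarrow> ('x \<Rightarrow> 'y \<Rightarrow> real) \<Rightarrow> ('x \<Rightarrow> 'y \<Rightarrow> real)
     \<Rightarrow> real \<Rightarrow> 'x \<Rightarrow> ('y \<Rightarrow> real) \<Rightarrow> bool" where
  "admissible M r A \<pi>0 \<gamma> x d \<longleftrightarrow>
     d \<in> borel_measurable M \<and> integrable M d \<and> (\<integral>y. d y \<partial>M) = 0 \<and>
     integrable M (\<lambda>y. r x y * d y) \<and>
     integrable M (\<lambda>y. (d y)\<^sup>2 / metric_weight A \<pi>0 \<gamma> x y) \<and>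
     (AE y in M. metric_weight A \<pi>0 \<gamma> x y = 0 \<longrightarrow> d y = 0)"

definition local_objective ::
  "'y measure \<Rightarrow> ('x \<Rightarrow> 'y \<Rightarrow> real) \<Rightarrow> ('x \<Rightarrow> 'y \<Rightarrow> real) \<Rightarrow> ('x \<Rightarrow> 'y \<Rightarrow> real)
     \<Rightarrow> real \<Rightarrow> real \<Rightarrow> 'x \<Rightarrow> ('y \<Rightarrow> real) \<Rightarrow> real" where
  "local_objective M r A \<pi>0 \<gamma> \<eta> x d =
     (\<integral>y. r x y * d y \<partial>M)
     - 1 / (2 * \<eta>) * (\<integral>y. (d y)\<^sup>2 / metric_weight A \<pi>0 \<gamma> x y \<partial>M)"

end

theory Submission
  imports Defs
begin

text \<open>Since admissible variations have total mass zero, the reward may be replaced by the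
  advantage \<open>A\<close> in the first variation. With the weight \<open>w = |A|^\<gamma> \<pi>0\<close>, the objective is then
  the integral of the concave quadratic \<open>A d - d\<^sup>2/(2\<eta> w)\<close> in \<open>d = \<delta>\<pi>(y)\<close>, and completing the square,
  \<open>A d - d\<^sup>2/(2\<eta> w) = (\<eta>/2) w A\<^sup>2 - (d - \<eta> w A)\<^sup>2/(2\<eta> w)\<close>,
  shows that it is maximised exactly by \<open>d = \<eta> w A = \<eta> \<pi>0 sgn(A) |A|^(1+\<gamma>)\<close>. The centring
  hypothesis on \<open>A\<close> is what makes this maximiser itself have total mass zero.\<close>

definition quadratic_objective ::
  "'a measure \<Rightarrow> ('a \<Rightarrow> real) \<Rightarrow> ('a \<Rightarrow> real) \<Rightarrow> real \<Rightarrow> ('a \<Rightarrow> real) \<Rightarrow> real" where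
  "quadratic_objective M a w \<eta> d =
     (\<integral>y. a y * d y \<partial>M) - 1 / (2 * \<eta>) * (\<integral>y. (d y)\<^sup>2 / w y \<partial>M)"

lemma completing_square_gain:
  fixes a w d \<eta> :: real
  assumes "\<eta> \<noteq> 0" and "w \<noteq> 0 \<or> d = 0"
  shows "a * d - d\<^sup>2 / w / (2 * \<eta>) = \<eta> / 2 * (w * a\<^sup>2) - (d - \<eta> * w * a)\<^sup>2 / w / (2 * \<eta>)"
  using assms by (auto simp: field_simps power2_eq_square)

lemma quadratic_objective_completing_square:
  fixes a w d :: "'a \<Rightarrow> real"
  assumes eta: "\<eta> \<noteq> 0"
    and [measurable]: "a \<in> borel_measurable M" "w \<in> borel_measurable M" "d \<in> borel_measurable M"
    and vanish: "AE y in M. w y = 0 \<longrightarrow> d y = 0"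
    and int_ad: "integrable M (\<lambda>y. a y * d y)"
    and int_dd: "integrable M (\<lambda>y. (d y)\<^sup>2 / w y)"
    and int_waa: "integrable M (\<lambda>y. w y * (a y)\<^sup>2)"
  defines "e \<equiv> \<lambda>y. (d y - \<eta> * w y * a y)\<^sup>2 / w y / (2 * \<eta>)"
  shows "integrable M e"
    and "quadratic_objective M a w \<eta> d = \<eta> / 2 * (\<integral>y. w y * (a y)\<^sup>2 \<partial>M) - (\<integral>y. e y \<partial>M)"
proof -
  let ?gain = "\<lambda>y. a y * d y - (d y)\<^sup>2 / w y / (2 * \<eta>)"
  have int_gain: "integrable M ?gain"
    using int_ad int_dd by (intro Bochner_Integration.integrable_diff integrable_divide_zero)
  have gain_eq: "AE y in M. ?gain y = \<eta> / 2 * (w y * (a y)\<^sup>2) - e y"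
    using vanish unfolding e_def by eventually_elim (use eta completing_square_gain in auto)
  have e_eq: "AE y in M. \<eta> / 2 * (w y * (a y)\<^sup>2) - ?gain y = e y"
    using gain_eq by eventually_elim simp
  show int_e: "integrable M e"
    using int_waa int_gain
    by (intro integrable_cong_AE_imp[OF _ _ e_eq]) (auto simp: e_def)
  have "(\<integral>y. ?gain y \<partial>M) =
      (\<integral>y. a y * d y \<partial>M) - (\<integral>y. (d y)\<^sup>2 / w y \<partial>M) / (2 * \<eta>)"
    unfolding integral_divide_zero[symmetric]
    by (rule Bochner_Integration.integral_diff[OF int_ad integrable_divide_zero[OF int_dd]])
  then have "quadratic_objective M a w \<eta> d = (\<integral>y. ?gain y \<partial>M)"
    by (simp add: quadratic_objective_def)
  also have "\<dots> = (\<integral>y. \<eta> / 2 * (w y * (a y)\<^sup>2) - e y \<partial>M)"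
    using gain_eq by (intro integral_cong_AE) (auto simp: e_def)
  also have "\<dots> = \<eta> / 2 * (\<integral>y. w y * (a y)\<^sup>2 \<partial>M) - (\<integral>y. e y \<partial>M)"
    using int_waa int_e by simp
  finally show "quadratic_objective M a w \<eta> d =
      \<eta> / 2 * (\<integral>y. w y * (a y)\<^sup>2 \<partial>M) - (\<integral>y. e y \<partial>M)" .
qed

lemma quadratic_objective_le_max:
  fixes a w d :: "'a \<Rightarrow> real"
  assumes eta: "\<eta> > 0" and w_nonneg: "\<And>y. w y \<ge> 0"
    and [measurable]: "a \<in> borel_measurable M" "w \<in> borel_measurable M" "d \<in> borel_measurable M"
    and vanish: "AE y in M. w y = 0 \<longrightarrow> d y = 0"
    and int_ad: "integrable M (\<lambda>y. a y * d y)"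
    and int_dd: "integrable M (\<lambda>y. (d y)\<^sup>2 / w y)"
    and int_waa: "integrable M (\<lambda>y. w y * (a y)\<^sup>2)"
  shows "quadratic_objective M a w \<eta> d \<le> \<eta> / 2 * (\<integral>y. w y * (a y)\<^sup>2 \<partial>M)"
    and "quadratic_objective M a w \<eta> d = \<eta> / 2 * (\<integral>y. w y * (a y)\<^sup>2 \<partial>M) \<Longrightarrow>
           AE y in M. d y = \<eta> * w y * a y"
proof -
  let ?e = "\<lambda>y. (d y - \<eta> * w y * a y)\<^sup>2 / w y / (2 * \<eta>)"
  have eta_ne: "\<eta> \<noteq> 0"
    using eta by simp
  note square = quadratic_objective_completing_square[OF eta_ne assms(3-9)]
  have e_nonneg: "AE y in M. 0 \<le> ?e y"
    using eta w_nonneg by simp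
  show "quadratic_objective M a w \<eta> d \<le> \<eta> / 2 * (\<integral>y. w y * (a y)\<^sup>2 \<partial>M)"
    using square eta e_nonneg by (simp add: integral_nonneg_AE)
  assume "quadratic_objective M a w \<eta> d = \<eta> / 2 * (\<integral>y. w y * (a y)\<^sup>2 \<partial>M)"
  then have "(\<integral>y. ?e y \<partial>M) = 0"
    using square eta by simp
  then have "AE y in M. ?e y = 0"
    using integral_nonneg_eq_0_iff_AE[OF _ e_nonneg] square eta by simp
  then show "AE y in M. d y = \<eta> * w y * a y"
    using vanish by eventually_elim (use eta w_nonneg in \<open>auto simp: order_le_less\<close>)
qed

text \<open>No integrability is needed: where \<open>w = 0\<close> both \<open>(\<eta> w a)\<^sup>2 / w\<close> and \<open>\<eta>\<^sup>2 w a\<^sup>2\<close>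
  vanish, and a non-integrable integrand has Bochner integral \<open>0\<close> on both sides.\<close>
lemma quadratic_objective_maximiser:
  fixes a w :: "'a \<Rightarrow> real"
  assumes "\<eta> \<noteq> 0"
  shows "quadratic_objective M a w \<eta> (\<lambda>y. \<eta> * w y * a y) =
           \<eta> / 2 * (\<integral>y. w y * (a y)\<^sup>2 \<partial>M)"
proof -
  have "(\<lambda>y. a y * (\<eta> * w y * a y)) = (\<lambda>y. \<eta> * (w y * (a y)\<^sup>2))"
    by (auto simp: power2_eq_square)
  moreover have "(\<lambda>y. (\<eta> * w y * a y)\<^sup>2 / w y) = (\<lambda>y. \<eta>\<^sup>2 * (w y * (a y)\<^sup>2))"
    by (auto simp: power2_eq_square)
  ultimately show ?thesis
    using assms by (simp add: quadratic_objective_def power2_eq_square field_simps)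
qed

lemma integral_mult_add_const_mean_zero:
  fixes f d :: "'a \<Rightarrow> real"
  assumes int_d: "integrable M d" and mean_zero: "(\<integral>y. d y \<partial>M) = 0"
    and int_fd: "integrable M (\<lambda>y. f y * d y)"
  shows "integrable M (\<lambda>y. (f y + c) * d y)"
    and "(\<integral>y. (f y + c) * d y \<partial>M) = (\<integral>y. f y * d y \<partial>M)"
proof -
  have split: "(\<lambda>y. (f y + c) * d y) = (\<lambda>y. f y * d y + c * d y)"
    by (simp add: distrib_right)
  show "integrable M (\<lambda>y. (f y + c) * d y)"
    unfolding split using int_d int_fd by simp
  show "(\<integral>y. (f y + c) * d y \<partial>M) = (\<integral>y. f y * d y \<partial>M)"
    unfolding split using int_d int_fd mean_zero by simp
qed

lemma gpow_nonneg: "gpow a g \<ge> 0"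
  by (simp add: gpow_def)

lemma measurable_gpow [measurable]:
  fixes f :: "'a \<Rightarrow> real"
  assumes [measurable]: "f \<in> borel_measurable M"
  shows "(\<lambda>y. gpow (f y) g) \<in> borel_measurable M"
  unfolding gpow_def by measurable

lemma gpow_mult_self:
  fixes a g :: real
  assumes "g \<ge> 0"
  shows "gpow a g * a = sgn a * \<bar>a\<bar> powr (1 + g)"
proof (cases "a = 0")
  case False
  then have "\<bar>a\<bar> powr (1 + g) = \<bar>a\<bar> * \<bar>a\<bar> powr g"
    by (simp add: powr_add)
  then show ?thesis
    using False by (auto simp: gpow_def sgn_if)
qed (simp add: gpow_def)

lemma gpow_mult_square:
  fixes a g :: real
  assumes "g \<ge> 0"
  shows "gpow a g * a\<^sup>2 = \<bar>a\<bar> powr (2 + g)"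
proof (cases "a = 0")
  case False
  then have "\<bar>a\<bar> powr (2 + g) = a\<^sup>2 * \<bar>a\<bar> powr g"
    by (simp add: powr_add powr_numeral)
  then show ?thesis
    using False by (auto simp: gpow_def)
qed (simp add: gpow_def)

lemma local_objective_eq_quadratic_objective:
  assumes adm: "admissible M r A \<pi>0 \<gamma> x d"
    and A_def: "\<And>y. A x y = r x y + c"
  shows "integrable M (\<lambda>y. A x y * d y)"
    and "local_objective M r A \<pi>0 \<gamma> \<eta> x d =
           quadratic_objective M (A x) (metric_weight A \<pi>0 \<gamma> x) \<eta> d"
  using integral_mult_add_const_mean_zero[of M d "r x" c] adm
  by (simp_all add: A_def admissible_def local_objective_def quadratic_objective_def)

lemma metric_weight_mult_square:
  assumes "\<gamma> \<ge> 0"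
  shows "metric_weight A \<pi>0 \<gamma> x y * (A x y)\<^sup>2 = \<pi>0 x y * \<bar>A x y\<bar> powr (2 + \<gamma>)"
  using gpow_mult_square[OF assms, of "A x y"] by (simp add: metric_weight_def mult_ac)

lemma measurable_metric_weight [measurable]:
  assumes [measurable]: "A x \<in> borel_measurable M" "\<pi>0 x \<in> borel_measurable M"
  shows "metric_weight A \<pi>0 \<gamma> x \<in> borel_measurable M"
  unfolding metric_weight_def by measurable

lemma admissible_weighted_advantage:
  assumes gamma: "\<gamma> \<ge> 0"
    and [measurable]: "A x \<in> borel_measurable M" "\<pi>0 x \<in> borel_measurable M"
    and pi_nonneg: "\<And>y. \<pi>0 x y \<ge> 0"
    and A_def: "\<And>y. A x y = r x y + c"
    and A_centered: "(\<integral>y. \<pi>0 x y * gpow (A x y) \<gamma> * A x y \<partial>M) = 0"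
    and int1: "integrable M (\<lambda>y. \<pi>0 x y * \<bar>A x y\<bar> powr (1 + \<gamma>))"
    and int2: "integrable M (\<lambda>y. \<pi>0 x y * \<bar>A x y\<bar> powr (2 + \<gamma>))"
  shows "admissible M r A \<pi>0 \<gamma> x (\<lambda>y. s * metric_weight A \<pi>0 \<gamma> x y * A x y)"
proof -
  define w where "w = metric_weight A \<pi>0 \<gamma> x"
  have [measurable]: "w \<in> borel_measurable M"
    unfolding w_def by measurable
  have int_waa: "integrable M (\<lambda>y. w y * (A x y)\<^sup>2)"
    using int2 by (simp add: w_def metric_weight_mult_square[OF gamma])
  have int_wa: "integrable M (\<lambda>y. w y * A x y)"
  proof (rule Bochner_Integration.integrable_bound[OF int1])
    have abs_gpow: "\<bar>gpow a \<gamma> * a\<bar> = \<bar>a\<bar> powr (1 + \<gamma>)" for a :: real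
      unfolding gpow_mult_self[OF gamma] by (cases "a = 0") (auto simp: abs_mult)
    have "norm (w y * A x y) = norm (\<pi>0 x y * \<bar>A x y\<bar> powr (1 + \<gamma>))" for y
    proof -
      have "w y * A x y = \<pi>0 x y * (gpow (A x y) \<gamma> * A x y)"
        by (simp add: w_def metric_weight_def mult_ac)
      then show ?thesis
        by (simp only: real_norm_def abs_mult[of "\<pi>0 x y"] abs_of_nonneg[OF pi_nonneg] abs_gpow) simp
    qed
    then show "AE y in M. norm (w y * A x y) \<le> norm (\<pi>0 x y * \<bar>A x y\<bar> powr (1 + \<gamma>))"
      by simp
  qed simp
  have int_d: "integrable M (\<lambda>y. s * w y * A x y)"
    using int_wa by (simp add: mult.assoc)
  have mean_zero: "(\<integral>y. s * w y * A x y \<partial>M) = 0"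
    using A_centered by (simp add: w_def metric_weight_def mult_ac)
  have int_ad: "integrable M (\<lambda>y. A x y * (s * w y * A x y))"
    using int_waa by (simp add: power2_eq_square mult_ac)
  have "integrable M (\<lambda>y. (A x y + - c) * (s * w y * A x y))"
    by (rule integral_mult_add_const_mean_zero(1)[OF int_d mean_zero int_ad])
  then have int_rd: "integrable M (\<lambda>y. r x y * (s * w y * A x y))"
    by (simp add: A_def)
  have "(\<lambda>y. (s * w y * A x y)\<^sup>2 / w y) = (\<lambda>y. s\<^sup>2 * (w y * (A x y)\<^sup>2))"
    by (auto simp: power2_eq_square)
  then have int_dd: "integrable M (\<lambda>y. (s * w y * A x y)\<^sup>2 / w y)"
    using int_waa by simp
  show ?thesis
    using int_d mean_zero int_rd int_dd unfolding admissible_def w_def[symmetric]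
    by simp
qed

lemma weighted_advantage_optimal_variation:
  assumes gamma: "\<gamma> \<ge> 0" and eta: "\<eta> > 0"
    and [measurable]: "A x \<in> borel_measurable M" "\<pi>0 x \<in> borel_measurable M"
    and pi_nonneg: "\<And>y. \<pi>0 x y \<ge> 0"
    and A_def: "\<And>y. A x y = r x y + c"
    and A_centered: "(\<integral>y. \<pi>0 x y * gpow (A x y) \<gamma> * A x y \<partial>M) = 0"
    and int1: "integrable M (\<lambda>y. \<pi>0 x y * \<bar>A x y\<bar> powr (1 + \<gamma>))"
    and int2: "integrable M (\<lambda>y. \<pi>0 x y * \<bar>A x y\<bar> powr (2 + \<gamma>))"
  defines "D \<equiv> \<lambda>y. \<eta> * metric_weight A \<pi>0 \<gamma> x y * A x y"
  shows "admissible M r A \<pi>0 \<gamma> x D"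
    and "admissible M r A \<pi>0 \<gamma> x d \<Longrightarrow>
           local_objective M r A \<pi>0 \<gamma> \<eta> x d \<le> local_objective M r A \<pi>0 \<gamma> \<eta> x D"
    and "admissible M r A \<pi>0 \<gamma> x d \<Longrightarrow>
           local_objective M r A \<pi>0 \<gamma> \<eta> x d = local_objective M r A \<pi>0 \<gamma> \<eta> x D \<Longrightarrow>
           AE y in M. d y = D y"
proof -
  let ?w = "metric_weight A \<pi>0 \<gamma> x"
  let ?max = "\<eta> / 2 * (\<integral>y. ?w y * (A x y)\<^sup>2 \<partial>M)"
  show adm_D: "admissible M r A \<pi>0 \<gamma> x D"
    unfolding D_def using assms(3-9) by (rule admissible_weighted_advantage[OF gamma])
  have value_D: "local_objective M r A \<pi>0 \<gamma> \<eta> x D = ?max"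
    using local_objective_eq_quadratic_objective(2)[OF adm_D A_def]
      quadratic_objective_maximiser[where a = "A x" and w = ?w] eta by (simp add: D_def)
  have w_meas: "?w \<in> borel_measurable M"
    by measurable
  have w_nonneg: "\<And>y. ?w y \<ge> 0"
    by (simp add: metric_weight_def gpow_nonneg pi_nonneg)
  have int_waa: "integrable M (\<lambda>y. ?w y * (A x y)\<^sup>2)"
    using int2 by (simp add: metric_weight_mult_square[OF gamma])
  assume adm: "admissible M r A \<pi>0 \<gamma> x d"
  then have d_meas: "d \<in> borel_measurable M"
    and vanish: "AE y in M. ?w y = 0 \<longrightarrow> d y = 0"
    and int_dd: "integrable M (\<lambda>y. (d y)\<^sup>2 / ?w y)"
    by (simp_all add: admissible_def)
  note objective = local_objective_eq_quadratic_objective[OF adm A_def]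
  note bound = quadratic_objective_le_max[OF eta w_nonneg assms(3) w_meas d_meas vanish
    objective(1) int_dd int_waa]
  show "local_objective M r A \<pi>0 \<gamma> \<eta> x d \<le> local_objective M r A \<pi>0 \<gamma> \<eta> x D"
    using bound(1) by (simp add: objective(2) value_D)
  assume "local_objective M r A \<pi>0 \<gamma> \<eta> x d = local_objective M r A \<pi>0 \<gamma> \<eta> x D"
  then have "quadratic_objective M (A x) ?w \<eta> d = ?max"
    by (simp only: objective(2) value_D)
  then show "AE y in M. d y = D y"
    unfolding D_def by (rule bound(2))
qed

theorem theorem3:
  fixes M :: "'y measure"
    and r :: "'x \<Rightarrow> 'y \<Rightarrow> real"
    and \<pi>0 :: "'x \<Rightarrow> 'y \<Rightarrow> real"
    and b :: "'x \<Rightarrow> real"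
    and A :: "'x \<Rightarrow> 'y \<Rightarrow> real"
    and \<gamma> \<eta> :: real
  assumes gamma: "\<gamma> \<ge> 0" and eta: "\<eta> > 0"
    and r_meas: "\<And>x. r x \<in> borel_measurable M"
    and pi_meas: "\<And>x. \<pi>0 x \<in> borel_measurable M"
    and pi_nonneg: "\<And>x y. \<pi>0 x y \<ge> 0"
    and pi_int: "\<And>x. integrable M (\<pi>0 x)"
    and pi_norm: "\<And>x. (\<integral>y. \<pi>0 x y \<partial>M) = 1"
    and A_def: "\<And>x y. A x y = r x y + b x"
    and A_centered: "\<And>x. (\<integral>y. \<pi>0 x y * gpow (A x y) \<gamma> * A x y \<partial>M) = 0"
    and int1: "\<And>x. integrable M (\<lambda>y. \<pi>0 x y * \<bar>A x y\<bar> powr (1 + \<gamma>))"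
    and int2: "\<And>x. integrable M (\<lambda>y. \<pi>0 x y * \<bar>A x y\<bar> powr (2 + \<gamma>))"
  shows "\<forall>x. let D = (\<lambda>y. \<eta> * (\<pi>0 x y * sgn (A x y) * \<bar>A x y\<bar> powr (1 + \<gamma>))) in
           admissible M r A \<pi>0 \<gamma> x D \<and>
           (\<forall>d. admissible M r A \<pi>0 \<gamma> x d \<longrightarrow>
                 local_objective M r A \<pi>0 \<gamma> \<eta> x d \<le> local_objective M r A \<pi>0 \<gamma> \<eta> x D) \<and>
           (\<forall>d. admissible M r A \<pi>0 \<gamma> x d \<and>
                 local_objective M r A \<pi>0 \<gamma> \<eta> x d = local_objective M r A \<pi>0 \<gamma> \<eta> x D
                 \<longrightarrow> (AE y in M. d y = D y))"
proof -
  let ?D = "\<lambda>x y. \<eta> * metric_weight A \<pi>0 \<gamma> x y * A x y"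
  have D_eq: "(\<lambda>y. \<eta> * (\<pi>0 x y * sgn (A x y) * \<bar>A x y\<bar> powr (1 + \<gamma>))) = ?D x" for x
    unfolding metric_weight_def mult.assoc gpow_mult_self[OF gamma, symmetric] by (simp add: mult_ac)
  have A_meas: "A x \<in> borel_measurable M" for x
  proof -
    have "A x = (\<lambda>y. r x y + b x)"
      by (rule ext) (rule A_def)
    then show ?thesis
      using r_meas by simp
  qed
  note optimal = weighted_advantage_optimal_variation[OF gamma eta]
  have "admissible M r A \<pi>0 \<gamma> x (?D x)" for x
    by (rule optimal(1)) (fact A_meas pi_meas pi_nonneg A_def A_centered int1 int2)+
  moreover have "local_objective M r A \<pi>0 \<gamma> \<eta> x d \<le> local_objective M r A \<pi>0 \<gamma> \<eta> x (?D x)"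
    if "admissible M r A \<pi>0 \<gamma> x d" for x d
    by (rule optimal(2)) (fact A_meas pi_meas pi_nonneg A_def A_centered int1 int2 that)+
  moreover have "AE y in M. d y = ?D x y"
    if "admissible M r A \<pi>0 \<gamma> x d"
      and "local_objective M r A \<pi>0 \<gamma> \<eta> x d = local_objective M r A \<pi>0 \<gamma> \<eta> x (?D x)" for x d
    by (rule optimal(3)) (fact A_meas pi_meas pi_nonneg A_def A_centered int1 int2 that)+
  ultimately show ?thesis
    unfolding Let_def D_eq by blast
qed

end
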